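(* Consider the CETC closed loop (continuous-time event-triggering rule with parameters $\theta,\eta,\theta_m,\kappa_0,\kappa_1,\kappa_2>0$ and $m^0<0$), and let $F=\sup_k t_k$. Then the dynamic variable satisfies $m(t)<0$ for all $t\in[0,F)$.
   Context: Standing setting. Fix $\ell>0$, $\lambda_1,\lambda_2>0$, $c_1,c_2\in C^0([0,\ell];\mathbb R)$ and constants $q\ne0$, $\rho\ne0$ with $|\rho q|\le \tfrac12$. For $f_1,\dots,f_n\in L^2(0,\ell)$ write $\|(f_1,\dots,f_n)^T\|=(\sum_i\|f_i\|^2_{L^2(0,\ell)})^{1/2}$. Let $\mathcal T=\{(x,\xi):0\le\xi\le x\le\ell\}$. Plant: $\partial_t u=-\lambda_1\partial_x u+c_1(x)v$, $\partial_t v=\lambda_2\partial_x v+c_2(x)u$, $u(0,t)=qv(0,t)$, $v(\ell,t)=\rho u(\ell,t)+\mathcal U(t)$, where $\mathcal U$ is the applied boundary input; measured output $v(0,t)$. Kernels (each system below has a unique continuous solution on $\mathcal T$): (P) $\lambda_1(\partial_x+\partial_\xi)P^{\alpha\alpha}=c_1(x)P^{\beta\alpha}$, $\lambda_1\partial_xP^{\alpha\beta}-\lambda_2\partial_\xi P^{\alpha\beta}=c_1(x)P^{\beta\beta}$, $\lambda_2\partial_xP^{\beta\alpha}-\lambda_1\partial_\xi P^{\beta\alpha}=-c_2(x)P^{\alpha\alpha}$, $\lambda_2(\partial_x+\partial_\xi)P^{\beta\beta}=-c_2(x)P^{\alpha\beta}$, with $P^{\alpha\alpha}(\ell,\xi)=\rho^{-1}P^{\beta\alpha}(\ell,\xi)$,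 $P^{\alpha\beta}(x,x)=-\frac{c_1(x)}{\lambda_1+\lambda_2}$, $P^{\beta\beta}(\ell,\xi)=\rho P^{\alpha\beta}(\ell,\xi)$, $P^{\beta\alpha}(x,x)=\frac{c_2(x)}{\lambda_1+\lambda_2}$. (R) $\lambda_1(\partial_x+\partial_\xi)R^{uu}=-c_2(\xi)R^{uv}$, $\lambda_1\partial_xR^{uv}-\lambda_2\partial_\xi R^{uv}=-c_1(\xi)R^{uu}$, $\lambda_2\partial_xR^{vu}-\lambda_1\partial_\xi R^{vu}=c_2(\xi)R^{vv}$, $\lambda_2(\partial_x+\partial_\xi)R^{vv}=c_1(\xi)R^{vu}$, with $R^{uu}(\ell,\xi)=\rho^{-1}R^{vu}(\ell,\xi)$, $R^{uv}(x,x)=-\frac{c_1(x)}{\lambda_1+\lambda_2}$, $R^{vv}(\ell,\xi)=\rho R^{uv}(\ell,\xi)$, $R^{vu}(x,x)=\frac{c_2(x)}{\lambda_1+\lambda_2}$. (K) $\lambda_1(\partial_x+\partial_\xi)K^{uu}=-c_2(\xi)K^{uv}$, $\lambda_1\partial_xK^{uv}-\lambda_2\partial_\xi K^{uv}=-c_1(\xi)K^{uu}$, $\lambda_2\partial_xK^{vu}-\lambda_1\partial_\xi K^{vu}=c_2(\xi)K^{vv}$, $\lambda_2(\partial_x+\partial_\xi)K^{vv}=c_1(\xi)K^{vu}$, with $K^{uu}(x,0)=\frac{\lambda_2}{q\lambda_1}K^{uv}(x,0)$, $K^{uv}(x,x)=\frac{c_1(x)}{\lambda_1+\lambda_2}$,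 $K^{vv}(x,0)=\frac{q\lambda_1}{\lambda_2}K^{vu}(x,0)$, $K^{vu}(x,x)=-\frac{c_2(x)}{\lambda_1+\lambda_2}$. Observer: with gains $p_1(x)=-\lambda_2P^{\alpha\beta}(x,0)$, $p_2(x)=-\lambda_2P^{\beta\beta}(x,0)$ and $\tilde v(0,t)=v(0,t)-\hat v(0,t)$: $\partial_t\hat u=-\lambda_1\partial_x\hat u+c_1(x)\hat v+p_1(x)\tilde v(0,t)$, $\partial_t\hat v=\lambda_2\partial_x\hat v+c_2(x)\hat u+p_2(x)\tilde v(0,t)$, $\hat u(0,t)=qv(0,t)$, $\hat v(\ell,t)=\rho\hat u(\ell,t)+\mathcal U(t)$. Transformed variables: $\tilde u=u-\hat u$, $\tilde v=v-\hat v$; $\tilde\beta(x,t)=\tilde v+\int_0^xR^{vu}(x,\xi)\tilde u(\xi,t)d\xi+\int_0^xR^{vv}(x,\xi)\tilde v(\xi,t)d\xi$ (so $\tilde\beta(0,t)=\tilde v(0,t)$); $\hat\alpha(x,t)=\hat u-\int_0^xK^{uu}(x,\xi)\hat u(\xi,t)d\xi-\int_0^xK^{uv}(x,\xi)\hat v(\xi,t)d\xi$, $\hat\beta(x,t)=\hat v-\int_0^xK^{vu}(x,\xi)\hat u(\xi,t)d\xi-\int_0^xK^{vv}(x,\xi)\hat v(\xi,t)d\xi$. Nominal feedback: $U(t)=\int_0^\ell N^u(\xi)\hat u(\xi,t)d\xi+\int_0^\ell N^v(\xi)\hat v(\xi,t)d\xi$ with $N^u(\xi)=K^{vu}(\ell,\xi)-\rho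 K^{uu}(\ell,\xi)$, $N^v(\xi)=K^{vv}(\ell,\xi)-\rho K^{uv}(\ell,\xi)$. Sampled-data input: given event times $0=t_0<t_1<\cdots$, the applied input is $\mathcal U(t)=U(t_k)$ for $t\in[t_k,t_{k+1})$ in both plant and observer; the input holding error is $d(t)=U(t_k)-U(t)$ for $t\in[t_k,t_{k+1})$. Dynamic variable: given $\eta,\theta_m,\kappa_0,\kappa_1,\kappa_2>0$ and $m^0<0$, $m$ is the continuous function with $m(0)=m^0$ that on each $(t_k,t_{k+1})$ solves $\dot m=-\eta m+\theta_m d^2-\kappa_0\|(\hat\alpha(\cdot,t),\hat\beta(\cdot,t))^T\|^2-\kappa_1\hat\alpha^2(\ell,t)-\kappa_2\tilde\beta^2(0,t)$. CETC rule: for $\theta>0$ let $\Gamma^c(t)=\theta d^2(t)+m(t)$; the event times are $t_0=0$ and $t_{k+1}=\inf\{t>t_k:\Gamma^c(t)>0\}$. *)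

theory Defs
  imports "HOL-Analysis.Analysis"
begin

type_synonym kernel = "real \<Rightarrow> real \<Rightarrow> real"
  (* kernels as functions of (x, xi); trajectories as functions of (x, t) *)

definition tri :: "real \<Rightarrow> (real \<times> real) set" where
  "tri L = {(x, xi). 0 \<le> xi \<and> xi \<le> x \<and> x \<le> L}"

definition char_deriv :: "kernel \<Rightarrow> real \<Rightarrow> real \<Rightarrow> real \<Rightarrow> real \<Rightarrow> real \<Rightarrow> bool" where
  "char_deriv f a b x xi r \<longleftrightarrow> ((\<lambda>s. f (x + a * s) (xi + b * s)) has_real_derivative r) (at 0)"

definition cont_tri :: "real \<Rightarrow> kernel \<Rightarrow> bool" where
  "cont_tri L f \<longleftrightarrow> continuous_on (tri L) (\<lambda>(x, xi). f x xi)"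

definition P_kernels :: "real \<Rightarrow> real \<Rightarrow> real \<Rightarrow> (real \<Rightarrow> real) \<Rightarrow> (real \<Rightarrow> real) \<Rightarrow> real
    \<Rightarrow> kernel \<Rightarrow> kernel \<Rightarrow> kernel \<Rightarrow> kernel \<Rightarrow> bool" where
  "P_kernels L l1 l2 c1 c2 \<rho> Paa Pab Pba Pbb \<longleftrightarrow>
     cont_tri L Paa \<and> cont_tri L Pab \<and> cont_tri L Pba \<and> cont_tri L Pbb \<and>
     (\<forall>x xi. 0 < xi \<and> xi < x \<and> x < L \<longrightarrow>
        char_deriv Paa l1 l1 x xi (c1 x * Pba x xi) \<and>
        char_deriv Pab l1 (- l2) x xi (c1 x * Pbb x xi) \<and>
        char_deriv Pba l2 (- l1) x xi (- (c2 x * Paa x xi)) \<and>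
        char_deriv Pbb l2 l2 x xi (- (c2 x * Pab x xi))) \<and>
     (\<forall>xi\<in>{0..L}. Paa L xi = Pba L xi / \<rho> \<and> Pbb L xi = \<rho> * Pab L xi) \<and>
     (\<forall>x\<in>{0..L}. Pab x x = - c1 x / (l1 + l2) \<and> Pba x x = c2 x / (l1 + l2))"

definition R_kernels :: "real \<Rightarrow> real \<Rightarrow> real \<Rightarrow> (real \<Rightarrow> real) \<Rightarrow> (real \<Rightarrow> real) \<Rightarrow> real
    \<Rightarrow> kernel \<Rightarrow> kernel \<Rightarrow> kernel \<Rightarrow> kernel \<Rightarrow> bool" where
  "R_kernels L l1 l2 c1 c2 \<rho> Ruu Ruv Rvu Rvv \<longleftrightarrow>
     cont_tri L Ruu \<and> cont_tri L Ruv \<and> cont_tri L Rvu \<and> cont_tri L Rvv \<and>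
     (\<forall>x xi. 0 < xi \<and> xi < x \<and> x < L \<longrightarrow>
        char_deriv Ruu l1 l1 x xi (- (c2 xi * Ruv x xi)) \<and>
        char_deriv Ruv l1 (- l2) x xi (- (c1 xi * Ruu x xi)) \<and>
        char_deriv Rvu l2 (- l1) x xi (c2 xi * Rvv x xi) \<and>
        char_deriv Rvv l2 l2 x xi (c1 xi * Rvu x xi)) \<and>
     (\<forall>xi\<in>{0..L}. Ruu L xi = Rvu L xi / \<rho> \<and> Rvv L xi = \<rho> * Ruv L xi) \<and>
     (\<forall>x\<in>{0..L}. Ruv x x = - c1 x / (l1 + l2) \<and> Rvu x x = c2 x / (l1 + l2))"

definition K_kernels :: "real \<Rightarrow> real \<Rightarrow> real \<Rightarrow> (real \<Rightarrow> real) \<Rightarrow> (real \<Rightarrow> real) \<Rightarrow> real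
    \<Rightarrow> kernel \<Rightarrow> kernel \<Rightarrow> kernel \<Rightarrow> kernel \<Rightarrow> bool" where
  "K_kernels L l1 l2 c1 c2 q Kuu Kuv Kvu Kvv \<longleftrightarrow>
     cont_tri L Kuu \<and> cont_tri L Kuv \<and> cont_tri L Kvu \<and> cont_tri L Kvv \<and>
     (\<forall>x xi. 0 < xi \<and> xi < x \<and> x < L \<longrightarrow>
        char_deriv Kuu l1 l1 x xi (- (c2 xi * Kuv x xi)) \<and>
        char_deriv Kuv l1 (- l2) x xi (- (c1 xi * Kuu x xi)) \<and>
        char_deriv Kvu l2 (- l1) x xi (c2 xi * Kvv x xi) \<and>
        char_deriv Kvv l2 l2 x xi (c1 xi * Kvu x xi)) \<and>
     (\<forall>x\<in>{0..L}. Kuu x 0 = l2 / (q * l1) * Kuv x 0 \<and> Kvv x 0 = q * l1 / l2 * Kvu x 0) \<and>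
     (\<forall>x\<in>{0..L}. Kuv x x = c1 x / (l1 + l2) \<and> Kvu x x = - c2 x / (l1 + l2))"

text \<open>Broad (characteristic) solution on times s >= tau of
  d_t u + a d_x u = S1,  d_t v - b d_x v = S2  on [0,L].\<close>
definition broad_pair :: "real \<Rightarrow> real \<Rightarrow> real \<Rightarrow> real \<Rightarrow> (real \<Rightarrow> real \<Rightarrow> real)
    \<Rightarrow> (real \<Rightarrow> real \<Rightarrow> real) \<Rightarrow> (real \<Rightarrow> real \<Rightarrow> real) \<Rightarrow> (real \<Rightarrow> real \<Rightarrow> real) \<Rightarrow> bool" where
  "broad_pair L a b tau S1 S2 u v \<longleftrightarrow>
     (\<forall>x s h. 0 \<le> x \<and> tau \<le> s \<and> 0 \<le> h \<and> x + a * h \<le> L \<longrightarrow>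
        (\<lambda>\<sigma>. S1 (x + a * \<sigma>) (s + \<sigma>)) integrable_on {0..h} \<and>
        u (x + a * h) (s + h) - u x s = integral {0..h} (\<lambda>\<sigma>. S1 (x + a * \<sigma>) (s + \<sigma>))) \<and>
     (\<forall>x s h. x \<le> L \<and> tau \<le> s \<and> 0 \<le> h \<and> 0 \<le> x - b * h \<longrightarrow>
        (\<lambda>\<sigma>. S2 (x - b * \<sigma>) (s + \<sigma>)) integrable_on {0..h} \<and>
        v (x - b * h) (s + h) - v x s = integral {0..h} (\<lambda>\<sigma>. S2 (x - b * \<sigma>) (s + \<sigma>)))"

definition tilde_beta :: "kernel \<Rightarrow> kernel \<Rightarrow> (real \<Rightarrow> real) \<Rightarrow> (real \<Rightarrow> real) \<Rightarrow> real \<Rightarrow> real" where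
  "tilde_beta Rvu Rvv ut vt x = vt x + integral {0..x} (\<lambda>xi. Rvu x xi * ut xi)
                                     + integral {0..x} (\<lambda>xi. Rvv x xi * vt xi)"

definition hat_alpha :: "kernel \<Rightarrow> kernel \<Rightarrow> (real \<Rightarrow> real) \<Rightarrow> (real \<Rightarrow> real) \<Rightarrow> real \<Rightarrow> real" where
  "hat_alpha Kuu Kuv uh vh x = uh x - integral {0..x} (\<lambda>xi. Kuu x xi * uh xi)
                                   - integral {0..x} (\<lambda>xi. Kuv x xi * vh xi)"

definition hat_beta :: "kernel \<Rightarrow> kernel \<Rightarrow> (real \<Rightarrow> real) \<Rightarrow> (real \<Rightarrow> real) \<Rightarrow> real \<Rightarrow> real" where
  "hat_beta Kvu Kvv uh vh x = vh x - integral {0..x} (\<lambda>xi. Kvu x xi * uh xi)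
                                  - integral {0..x} (\<lambda>xi. Kvv x xi * vh xi)"

definition sqnorm2 :: "real \<Rightarrow> (real \<Rightarrow> real) \<Rightarrow> (real \<Rightarrow> real) \<Rightarrow> real" where
  "sqnorm2 L f g = integral {0..L} (\<lambda>x. (f x)\<^sup>2) + integral {0..L} (\<lambda>x. (g x)\<^sup>2)"

definition nominal_U :: "real \<Rightarrow> real \<Rightarrow> kernel \<Rightarrow> kernel \<Rightarrow> kernel \<Rightarrow> kernel
    \<Rightarrow> (real \<Rightarrow> real) \<Rightarrow> (real \<Rightarrow> real) \<Rightarrow> real" where
  "nominal_U L \<rho> Kuu Kuv Kvu Kvv uh vh =
     integral {0..L} (\<lambda>xi. (Kvu L xi - \<rho> * Kuu L xi) * uh xi)
   + integral {0..L} (\<lambda>xi. (Kvv L xi - \<rho> * Kuv L xi) * vh xi)"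

text \<open>The k-th inter-event piece of the CETC closed loop: starting at event time tau = t_k,
  plant + observer run with the input held at U(t_k) (for all later times), together with
  the dynamic variable m (Caratheodory solution of its ODE) and the next event time given
  by the CETC rule evaluated along this held-input evolution.\<close>
definition cetc_piece ::
  "real \<Rightarrow> real \<Rightarrow> real \<Rightarrow> (real \<Rightarrow> real) \<Rightarrow> (real \<Rightarrow> real) \<Rightarrow> real \<Rightarrow> real
   \<Rightarrow> kernel \<Rightarrow> kernel \<Rightarrow> kernel \<Rightarrow> kernel \<Rightarrow> kernel \<Rightarrow> kernel \<Rightarrow> kernel \<Rightarrow> kernel
   \<Rightarrow> real \<Rightarrow> real \<Rightarrow> real \<Rightarrow> real \<Rightarrow> real \<Rightarrow> real
   \<Rightarrow> real \<Rightarrow> ereal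
   \<Rightarrow> (real \<Rightarrow> real \<Rightarrow> real) \<Rightarrow> (real \<Rightarrow> real \<Rightarrow> real) \<Rightarrow> (real \<Rightarrow> real \<Rightarrow> real)
   \<Rightarrow> (real \<Rightarrow> real \<Rightarrow> real) \<Rightarrow> (real \<Rightarrow> real) \<Rightarrow> bool" where
  "cetc_piece L l1 l2 c1 c2 q \<rho> Pab Pbb Rvu Rvv Kuu Kuv Kvu Kvv
      \<theta> \<eta> \<theta>m \<kappa>0 \<kappa>1 \<kappa>2 tau tnext u v uh vh m \<longleftrightarrow>
   (let p1 = (\<lambda>x. - l2 * Pab x 0); p2 = (\<lambda>x. - l2 * Pbb x 0);
        Ut = (\<lambda>s. nominal_U L \<rho> Kuu Kuv Kvu Kvv (\<lambda>x. uh x s) (\<lambda>x. vh x s));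
        d = (\<lambda>s. Ut tau - Ut s);
        rhs = (\<lambda>s. - \<eta> * m s + \<theta>m * (d s)\<^sup>2
                 - \<kappa>0 * sqnorm2 L (hat_alpha Kuu Kuv (\<lambda>x. uh x s) (\<lambda>x. vh x s))
                                  (hat_beta Kvu Kvv (\<lambda>x. uh x s) (\<lambda>x. vh x s))
                 - \<kappa>1 * (hat_alpha Kuu Kuv (\<lambda>x. uh x s) (\<lambda>x. vh x s) L)\<^sup>2
                 - \<kappa>2 * (tilde_beta Rvu Rvv (\<lambda>x. u x s - uh x s) (\<lambda>x. v x s - vh x s) 0)\<^sup>2)
    in broad_pair L l1 l2 tau (\<lambda>x s. c1 x * v x s) (\<lambda>x s. c2 x * u x s) u v \<and>
       broad_pair L l1 l2 tau
         (\<lambda>x s. c1 x * vh x s + p1 x * (v 0 s - vh 0 s))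
         (\<lambda>x s. c2 x * uh x s + p2 x * (v 0 s - vh 0 s)) uh vh \<and>
       (\<forall>s>tau. u 0 s = q * v 0 s \<and> v L s = \<rho> * u L s + Ut tau \<and>
                uh 0 s = q * v 0 s \<and> vh L s = \<rho> * uh L s + Ut tau) \<and>
       (\<forall>s\<ge>tau. rhs integrable_on {tau..s} \<and> m s = m tau + integral {tau..s} rhs) \<and>
       tnext = Inf {ereal s | s. tau < s \<and> \<theta> * (d s)\<^sup>2 + m s > 0})"

text \<open>The whole CETC closed loop: event times t (extended reals, \<infinity> = no further event),
  and for every finite event time t k the k-th piece, glued continuously to the next one.\<close>
definition cetc_closed_loop ::
  "real \<Rightarrow> real \<Rightarrow> real \<Rightarrow> (real \<Rightarrow> real) \<Rightarrow> (real \<Rightarrow> real) \<Rightarrow> real \<Rightarrow> real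
   \<Rightarrow> kernel \<Rightarrow> kernel \<Rightarrow> kernel \<Rightarrow> kernel \<Rightarrow> kernel \<Rightarrow> kernel \<Rightarrow> kernel \<Rightarrow> kernel
   \<Rightarrow> real \<Rightarrow> real \<Rightarrow> real \<Rightarrow> real \<Rightarrow> real \<Rightarrow> real \<Rightarrow> real
   \<Rightarrow> (nat \<Rightarrow> ereal)
   \<Rightarrow> (nat \<Rightarrow> real \<Rightarrow> real \<Rightarrow> real) \<Rightarrow> (nat \<Rightarrow> real \<Rightarrow> real \<Rightarrow> real) \<Rightarrow> (nat \<Rightarrow> real \<Rightarrow> real \<Rightarrow> real)
   \<Rightarrow> (nat \<Rightarrow> real \<Rightarrow> real \<Rightarrow> real) \<Rightarrow> (nat \<Rightarrow> real \<Rightarrow> real) \<Rightarrow> bool" where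
  "cetc_closed_loop L l1 l2 c1 c2 q \<rho> Pab Pbb Rvu Rvv Kuu Kuv Kvu Kvv
      \<theta> \<eta> \<theta>m \<kappa>0 \<kappa>1 \<kappa>2 m0 t u v uh vh m \<longleftrightarrow>
   t 0 = 0 \<and> m 0 0 = m0 \<and>
   (\<forall>k tau. t k = ereal tau \<longrightarrow>
      cetc_piece L l1 l2 c1 c2 q \<rho> Pab Pbb Rvu Rvv Kuu Kuv Kvu Kvv
        \<theta> \<eta> \<theta>m \<kappa>0 \<kappa>1 \<kappa>2 tau (t (Suc k)) (u k) (v k) (uh k) (vh k) (m k)) \<and>
   (\<forall>k tau. t (Suc k) = ereal tau \<longrightarrow>
      (\<forall>x\<in>{0..L}. u (Suc k) x tau = u k x tau \<and> v (Suc k) x tau = v k x tau \<and>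
                  uh (Suc k) x tau = uh k x tau \<and> vh (Suc k) x tau = vh k x tau) \<and>
      m (Suc k) tau = m k tau)"

text \<open>The dynamic variable of the closed loop: on [t_k, t_(k+1)) it is the k-th piece.\<close>
definition m_cl :: "(nat \<Rightarrow> ereal) \<Rightarrow> (nat \<Rightarrow> real \<Rightarrow> real) \<Rightarrow> real \<Rightarrow> real" where
  "m_cl t m s = m (LEAST k. ereal s < t (Suc k)) s"

end

theory Submission
  imports Defs
begin

text \<open>Between two events the triggering condition keeps \<open>\<theta> d\<^sup>2 \<le> -m\<close>, so the right-hand
  side of the equation for \<open>m\<close> is bounded by \<open>(\<eta> + \<theta>\<^sub>m/\<theta>)(-m)\<close>. A quantity starting negative whose
  growth is bounded by a multiple of its own modulus cannot reach zero: near a first root \<open>z\<close>,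
  on an interval of length \<open>1/(2c)\<close>, it could recover at most half of its largest modulus. Since
  \<open>m\<close> is continuous across events, negativity propagates from event to event up to \<open>sup t\<^sub>k\<close>.\<close>

lemma continuous_on_integral_equation:
  fixes m rhs :: "real \<Rightarrow> real"
  assumes eq: "\<And>s. s \<in> {a..b} \<Longrightarrow> rhs integrable_on {a..s} \<and> m s = m a + integral {a..s} rhs"
  shows "continuous_on {a..b} m"
proof (cases "a \<le> b")
  case True
  then have "rhs integrable_on {a..b}"
    using eq[of b] by simp
  then have "continuous_on {a..b} (\<lambda>s. m a + integral {a..s} rhs)"
    by (intro continuous_intros indefinite_integral_continuous_1)
  then show ?thesis
    by (rule continuous_on_eq) (metis eq)
qed simp

lemma integral_equation_neg_at_first_root:
  fixes m rhs :: "real \<Rightarrow> real"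
  assumes eq: "\<And>s. s \<in> {a..z} \<Longrightarrow> rhs integrable_on {a..s} \<and> m s = m a + integral {a..s} rhs"
    and bound: "\<And>\<sigma>. \<sigma> \<in> {a<..<z} \<Longrightarrow> rhs \<sigma> \<le> c * - m \<sigma>"
    and "c > 0" and neg: "\<And>s. s \<in> {a..<z} \<Longrightarrow> m s < 0" and "a < z"
  shows "m z < 0"
proof (rule ccontr)
  assume root: "\<not> m z < 0"
  define s1 where "s1 = max ((a + z) / 2) (z - 1 / (2 * c))"
  have s1: "a < s1" "s1 < z"
    using \<open>a < z\<close> \<open>c > 0\<close> by (auto simp: s1_def max_def)
  have s1_close: "z - s1 \<le> 1 / (2 * c)"
    unfolding s1_def by linarith
  have "continuous_on {a..z} m"
    by (rule continuous_on_integral_equation[OF eq])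
  then have "continuous_on {s1..z} (\<lambda>s. - m s)"
    using s1 by (intro continuous_intros) (auto elim: continuous_on_subset)
  moreover have "{s1..z} \<noteq> {}"
    using s1 by simp
  ultimately obtain s2 where s2: "s2 \<in> {s1..z}" and s2_max: "\<And>y. y \<in> {s1..z} \<Longrightarrow> - m y \<le> - m s2"
    using continuous_attains_sup[OF compact_Icc] by blast
  define M where "M = - m s2"
  have "M > 0"
    using s2_max[of s1] neg[of s1] s1 by (auto simp: M_def)
  then have "s2 < z"
    using s2 root by (cases "s2 = z") (auto simp: M_def)
  \<comment> \<open>the value at \<open>z\<close> is irrelevant for the integral, but the bound is not assumed there\<close>
  define g where "g = (\<lambda>\<sigma>. if \<sigma> = z then c * M else rhs \<sigma>)"
  have int_z: "rhs integrable_on {a..z}"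
    using eq[of z] \<open>a < z\<close> by simp
  then have int_s2z: "rhs integrable_on {s2..z}"
    by (rule integrable_subinterval_real) (use s1 s2 in auto)
  have "integral {s2..z} rhs = integral {s2..z} g"
    by (rule integral_spike[of "{z}"]) (auto simp: g_def)
  also have "\<dots> \<le> integral {s2..z} (\<lambda>_. c * M)"
  proof (rule integral_le)
    show "g integrable_on {s2..z}"
      by (rule integrable_spike[OF int_s2z, of "{z}"]) (auto simp: g_def)
    show "g \<sigma> \<le> c * M" if "\<sigma> \<in> {s2..z}" for \<sigma>
    proof (cases "\<sigma> = z")
      case False
      then have "rhs \<sigma> \<le> c * - m \<sigma>"
        using bound that s1 s2 by auto
      also have "\<dots> \<le> c * M"
        using s2_max[of \<sigma>] that s2 \<open>c > 0\<close> by (auto simp: M_def)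
      finally show ?thesis
        using False by (simp add: g_def)
    qed (simp add: g_def)
  qed (rule Henstock_Kurzweil_Integration.integrable_const_ivl)
  also have "\<dots> = (z - s2) * (c * M)"
    using \<open>s2 < z\<close> by simp
  also have "\<dots> \<le> 1 / (2 * c) * (c * M)"
    using s1_close s2 \<open>c > 0\<close> \<open>M > 0\<close> by (intro mult_right_mono) auto
  also have "\<dots> = M / 2"
    using \<open>c > 0\<close> by simp
  finally have gain: "integral {s2..z} rhs \<le> M / 2" .
  have "integral {a..s2} rhs + integral {s2..z} rhs = integral {a..z} rhs"
    by (rule Henstock_Kurzweil_Integration.integral_combine[OF _ _ int_z]) (use s1 s2 in auto)
  moreover have "m z = m a + integral {a..z} rhs" "m s2 = m a + integral {a..s2} rhs"
    using eq[of z] eq[of s2] s1 s2 \<open>a < z\<close> by simp_all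
  ultimately have "m z = - M + integral {s2..z} rhs"
    by (simp add: M_def)
  then show False
    using gain root \<open>M > 0\<close> by simp
qed

lemma integral_equation_stays_negative:
  fixes m rhs :: "real \<Rightarrow> real"
  assumes eq: "\<And>s. s \<in> {a..b} \<Longrightarrow> rhs integrable_on {a..s} \<and> m s = m a + integral {a..s} rhs"
    and bound: "\<And>\<sigma>. \<sigma> \<in> {a<..<b} \<Longrightarrow> rhs \<sigma> \<le> c * - m \<sigma>"
    and "c > 0" and "m a < 0" and "a \<le> b"
  shows "m b < 0"
proof (rule ccontr)
  assume "\<not> m b < 0"
  define Z where "Z = {a..b} \<inter> m -` {0..}"
  have "closed Z"
    unfolding Z_def by (rule continuous_closed_preimage[OF continuous_on_integral_equation[OF eq]]) auto
  moreover have "b \<in> Z" "bdd_below Z"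
    using \<open>\<not> m b < 0\<close> \<open>a \<le> b\<close> by (auto simp: Z_def intro: bdd_belowI[of _ a])
  ultimately have "Inf Z \<in> Z"
    using closed_contains_Inf by blast
  then have z: "a \<le> Inf Z" "Inf Z \<le> b" "0 \<le> m (Inf Z)"
    by (auto simp: Z_def)
  have before: "m s < 0" if "s \<in> {a..<Inf Z}" for s
  proof (rule ccontr)
    assume "\<not> m s < 0"
    with that z have "s \<in> Z"
      by (auto simp: Z_def)
    then have "Inf Z \<le> s"
      using \<open>bdd_below Z\<close> by (rule cInf_lower)
    with that show False
      by simp
  qed
  have "a \<noteq> Inf Z"
    using z(3) \<open>m a < 0\<close> by force
  with z(1) have "a < Inf Z"
    by simp
  have "m (Inf Z) < 0"
  proof (rule integral_equation_neg_at_first_root[where a = a and z = "Inf Z" and m = m and rhs = rhs and c = c])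
    show "rhs integrable_on {a..s} \<and> m s = m a + integral {a..s} rhs" if "s \<in> {a..Inf Z}" for s
      using that z(2) by (intro eq) simp
    show "rhs \<sigma> \<le> c * - m \<sigma>" if "\<sigma> \<in> {a<..<Inf Z}" for \<sigma>
      using that z(2) by (intro bound) simp
  qed (use before \<open>c > 0\<close> \<open>a < Inf Z\<close> in auto)
  then show False
    using z by simp
qed

lemma ereal_le_Inf_later:
  "ereal \<tau> \<le> Inf {ereal s | s. \<tau> < s \<and> P s}"
  by (auto intro!: Inf_greatest)

lemma not_before_Inf_later:
  assumes "\<tau> < \<sigma>" "ereal \<sigma> < Inf {ereal s | s. \<tau> < s \<and> P s}"
  shows "\<not> P \<sigma>"
  using assms Inf_lower[of "ereal \<sigma>" "{ereal s | s. \<tau> < s \<and> P s}"] by auto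

lemma sqnorm2_nonneg: "0 \<le> sqnorm2 L f g"
proof -
  have "0 \<le> integral S (\<lambda>x. (h x)\<^sup>2)" for S and h :: "real \<Rightarrow> real"
    by (cases "(\<lambda>x. (h x)\<^sup>2) integrable_on S")
      (auto intro: integral_nonneg simp: not_integrable_integral)
  then show ?thesis
    unfolding sqnorm2_def by simp
qed

lemma cetc_piece_event_le_next:
  assumes "cetc_piece L l1 l2 c1 c2 q \<rho> Pab Pbb Rvu Rvv Kuu Kuv Kvu Kvv
      \<theta> \<eta> \<theta>m \<kappa>0 \<kappa>1 \<kappa>2 \<tau> tnext u v uh vh m"
  shows "ereal \<tau> \<le> tnext"
  using assms unfolding cetc_piece_def Let_def by (elim conjE) (hypsubst, rule ereal_le_Inf_later)

lemma cetc_piece_m_neg: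
  assumes piece: "cetc_piece L l1 l2 c1 c2 q \<rho> Pab Pbb Rvu Rvv Kuu Kuv Kvu Kvv
      \<theta> \<eta> \<theta>m \<kappa>0 \<kappa>1 \<kappa>2 \<tau> tnext u v uh vh m"
    and "\<theta> > 0" "\<eta> > 0" "\<theta>m > 0" "\<kappa>0 > 0" "\<kappa>1 > 0" "\<kappa>2 > 0"
    and "m \<tau> < 0" "\<tau> \<le> s" "ereal s \<le> tnext"
  shows "m s < 0"
proof -
  define Ut where "Ut = (\<lambda>s. nominal_U L \<rho> Kuu Kuv Kvu Kvv (\<lambda>x. uh x s) (\<lambda>x. vh x s))"
  define d where "d = (\<lambda>s. Ut \<tau> - Ut s)"
  define ha where "ha = (\<lambda>s. hat_alpha Kuu Kuv (\<lambda>x. uh x s) (\<lambda>x. vh x s))"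
  define hb where "hb = (\<lambda>s. hat_beta Kvu Kvv (\<lambda>x. uh x s) (\<lambda>x. vh x s))"
  define tb where "tb = (\<lambda>s. tilde_beta Rvu Rvv (\<lambda>x. u x s - uh x s) (\<lambda>x. v x s - vh x s) 0)"
  define rhs where "rhs = (\<lambda>s. - \<eta> * m s + \<theta>m * (d s)\<^sup>2 - \<kappa>0 * sqnorm2 L (ha s) (hb s)
                               - \<kappa>1 * (ha s L)\<^sup>2 - \<kappa>2 * (tb s)\<^sup>2)"
  have "(\<forall>s\<ge>\<tau>. rhs integrable_on {\<tau>..s} \<and> m s = m \<tau> + integral {\<tau>..s} rhs) \<and>
    tnext = Inf {ereal s | s. \<tau> < s \<and> \<theta> * (d s)\<^sup>2 + m s > 0}"
    using piece unfolding cetc_piece_def Let_def rhs_def d_def Ut_def ha_def hb_def tb_def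
    by (elim conjE) (rule conjI; assumption)
  then have eq: "\<forall>s\<ge>\<tau>. rhs integrable_on {\<tau>..s} \<and> m s = m \<tau> + integral {\<tau>..s} rhs"
    and next_event: "tnext = Inf {ereal s | s. \<tau> < s \<and> \<theta> * (d s)\<^sup>2 + m s > 0}"
    by blast+
  show ?thesis
  proof (rule integral_equation_stays_negative[where a = \<tau> and b = s and m = m and rhs = rhs and c = "\<eta> + \<theta>m / \<theta>"])
    show "rhs integrable_on {\<tau>..x} \<and> m x = m \<tau> + integral {\<tau>..x} rhs" if "x \<in> {\<tau>..s}" for x
      using that by (intro eq[rule_format]) simp
    show "rhs \<sigma> \<le> (\<eta> + \<theta>m / \<theta>) * - m \<sigma>" if "\<sigma> \<in> {\<tau><..<s}" for \<sigma>
    proof -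
      have "ereal \<sigma> < tnext"
        using that \<open>ereal s \<le> tnext\<close> by (auto elim: less_le_trans[rotated])
      then have "\<theta> * (d \<sigma>)\<^sup>2 \<le> - m \<sigma>"
        using not_before_Inf_later[of \<tau> \<sigma>] that next_event by fastforce
      then have "\<theta>m * (\<theta> * (d \<sigma>)\<^sup>2) \<le> \<theta>m * - m \<sigma>"
        using \<open>\<theta>m > 0\<close> by (intro mult_left_mono) auto
      then have "\<theta>m * (d \<sigma>)\<^sup>2 \<le> \<theta>m / \<theta> * - m \<sigma>"
        using \<open>\<theta> > 0\<close> by (simp add: field_simps)
      moreover have "0 \<le> \<kappa>0 * sqnorm2 L (ha \<sigma>) (hb \<sigma>)" "0 \<le> \<kappa>1 * (ha \<sigma> L)\<^sup>2"
        "0 \<le> \<kappa>2 * (tb \<sigma>)\<^sup>2"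
        using sqnorm2_nonneg \<open>\<kappa>0 > 0\<close> \<open>\<kappa>1 > 0\<close> \<open>\<kappa>2 > 0\<close> by simp_all
      then have "rhs \<sigma> \<le> - \<eta> * m \<sigma> + \<theta>m * (d \<sigma>)\<^sup>2"
        by (simp add: rhs_def)
      ultimately show ?thesis
        by (simp add: algebra_simps)
    qed
    show "\<eta> + \<theta>m / \<theta> > 0"
      using \<open>\<theta> > 0\<close> \<open>\<eta> > 0\<close> \<open>\<theta>m > 0\<close> by (simp add: add_pos_pos)
  qed fact+
qed

lemma cetc_closed_loop_piece:
  assumes "cetc_closed_loop L l1 l2 c1 c2 q \<rho> Pab Pbb Rvu Rvv Kuu Kuv Kvu Kvv
           \<theta> \<eta> \<theta>m \<kappa>0 \<kappa>1 \<kappa>2 m0 t u v uh vh m" and "t k = ereal \<tau>"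
  shows "cetc_piece L l1 l2 c1 c2 q \<rho> Pab Pbb Rvu Rvv Kuu Kuv Kvu Kvv
      \<theta> \<eta> \<theta>m \<kappa>0 \<kappa>1 \<kappa>2 \<tau> (t (Suc k)) (u k) (v k) (uh k) (vh k) (m k)"
  using assms unfolding cetc_closed_loop_def by blast

lemma cetc_closed_loop_m_neg_at_events:
  assumes loop: "cetc_closed_loop L l1 l2 c1 c2 q \<rho> Pab Pbb Rvu Rvv Kuu Kuv Kvu Kvv
           \<theta> \<eta> \<theta>m \<kappa>0 \<kappa>1 \<kappa>2 m0 t u v uh vh m"
    and pos: "\<theta> > 0" "\<eta> > 0" "\<theta>m > 0" "\<kappa>0 > 0" "\<kappa>1 > 0" "\<kappa>2 > 0"
    and "m0 < 0" and "\<And>j. j \<le> i \<Longrightarrow> t j \<noteq> \<infinity>"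
  shows "\<exists>\<tau>. t i = ereal \<tau> \<and> m i \<tau> < 0"
  using assms(9)
proof (induction i)
  case 0
  have "t 0 = ereal 0" "m 0 0 = m0"
    using loop unfolding cetc_closed_loop_def zero_ereal_def by blast+
  then show ?case
    using \<open>m0 < 0\<close> by blast
next
  case (Suc i)
  then obtain \<tau> where \<tau>: "t i = ereal \<tau>" "m i \<tau> < 0"
    by auto
  have piece: "cetc_piece L l1 l2 c1 c2 q \<rho> Pab Pbb Rvu Rvv Kuu Kuv Kvu Kvv
      \<theta> \<eta> \<theta>m \<kappa>0 \<kappa>1 \<kappa>2 \<tau> (t (Suc i)) (u i) (v i) (uh i) (vh i) (m i)"
    using loop \<tau>(1) by (rule cetc_closed_loop_piece)
  then have "ereal \<tau> \<le> t (Suc i)"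
    by (rule cetc_piece_event_le_next)
  then obtain \<tau>' where \<tau>': "t (Suc i) = ereal \<tau>'" "\<tau> \<le> \<tau>'"
    using Suc.prems[of "Suc i"] by (cases "t (Suc i)") auto
  then have "m i \<tau>' < 0"
    using cetc_piece_m_neg[OF piece pos \<tau>(2)] by simp
  moreover have "m (Suc i) \<tau>' = m i \<tau>'"
    using loop \<tau>'(1) unfolding cetc_closed_loop_def by blast
  ultimately show ?case
    using \<tau>'(1) by auto
qed

theorem lemma2:
  fixes L l1 l2 q \<rho> \<theta> \<eta> \<theta>m \<kappa>0 \<kappa>1 \<kappa>2 m0 :: real
    and c1 c2 :: "real \<Rightarrow> real"
    and Paa Pab Pba Pbb Ruu Ruv Rvu Rvv Kuu Kuv Kvu Kvv :: kernel
    and t :: "nat \<Rightarrow> ereal"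
    and u v uh vh :: "nat \<Rightarrow> real \<Rightarrow> real \<Rightarrow> real"
    and m :: "nat \<Rightarrow> real \<Rightarrow> real"
  assumes "L > 0" "l1 > 0" "l2 > 0"
    and "continuous_on {0..L} c1" "continuous_on {0..L} c2"
    and "q \<noteq> 0" "\<rho> \<noteq> 0" "\<bar>\<rho> * q\<bar> \<le> 1/2"
    and "P_kernels L l1 l2 c1 c2 \<rho> Paa Pab Pba Pbb"
    and "R_kernels L l1 l2 c1 c2 \<rho> Ruu Ruv Rvu Rvv"
    and "K_kernels L l1 l2 c1 c2 q Kuu Kuv Kvu Kvv"
    and "\<theta> > 0" "\<eta> > 0" "\<theta>m > 0" "\<kappa>0 > 0" "\<kappa>1 > 0" "\<kappa>2 > 0" "m0 < 0"
    and "cetc_closed_loop L l1 l2 c1 c2 q \<rho> Pab Pbb Rvu Rvv Kuu Kuv Kvu Kvv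
           \<theta> \<eta> \<theta>m \<kappa>0 \<kappa>1 \<kappa>2 m0 t u v uh vh m"
  shows "\<forall>s::real. 0 \<le> s \<and> ereal s < (SUP k. t k) \<longrightarrow> m_cl t m s < 0"
proof (intro allI impI, elim conjE)
  fix s :: real
  assume "0 \<le> s" "ereal s < (SUP k. t k)"
  note loop = assms(19) and pos = assms(12-17)
  have t0: "t 0 = 0"
    using loop unfolding cetc_closed_loop_def by blast
  obtain j where "ereal s < t j"
    using \<open>ereal s < (SUP k. t k)\<close> by (auto simp: less_SUP_iff)
  with t0 \<open>0 \<le> s\<close> have "\<exists>k. ereal s < t (Suc k)"
    by (cases j) auto
  define k where "k = (LEAST k. ereal s < t (Suc k))"
  have after: "ereal s < t (Suc k)"
    unfolding k_def using \<open>\<exists>k. ereal s < t (Suc k)\<close> by (rule LeastI_ex)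
  have earlier: "t j \<le> ereal s" if "j \<le> k" for j
    using that t0 \<open>0 \<le> s\<close> not_less_Least[of "j - 1" "\<lambda>k. ereal s < t (Suc k)"]
    by (cases j) (auto simp: k_def[symmetric] not_less)
  obtain \<tau> where \<tau>: "t k = ereal \<tau>" "m k \<tau> < 0"
    using cetc_closed_loop_m_neg_at_events[OF loop pos \<open>m0 < 0\<close>, of k] earlier by force
  have "m k s < 0"
    using cetc_piece_m_neg[OF cetc_closed_loop_piece[OF loop \<tau>(1)] pos \<tau>(2)]
      earlier[of k] after \<tau>(1) by simp
  then show "m_cl t m s < 0"
    by (simp add: m_cl_def k_def)
qed

end
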